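(* Let $A,B\in\mathrm{SL}_2\mathbb{Z}$ be noncommuting, well oriented, with $2\le\mathrm{tr}(A)<\mathrm{tr}(B)$. If $[ab]<[b^2]$, then for every $s\ge1$ and $k_1,\dots,k_s\ge1$ we have $[ab^{k_1}ab^{k_2}\cdots ab^{k_s}]<[b^{k_1+\cdots+k_s+s}]$.
   Context: Words are finite strings over $\{a,b\}$; $\phi$ is the homomorphism with $\phi(a)=A,\phi(b)=B$, and $[w]=\mathrm{tr}(\phi(w))$. Fixed points are for the Möbius action on $\partial\mathcal{H}=\mathbb{P}^1\mathbb{R}$; $\alpha^\pm$ ($\beta^\pm$) are the attracting/repelling fixed points of $A$ ($B$), both equal to the unique fixed point if parabolic. With $\partial\mathcal{H}$ cyclically ordered and $[\alpha,\beta]$ the closed counterclockwise interval from $\alpha$ to $\beta$, let $I^+=\{\alpha^+\}$ if $\alpha^+=\beta^+$, and otherwise the one of $[\alpha^+,\beta^+],[\beta^+,\alpha^+]$ mapped into itself by both $A$ and $B$ (if it exists); define $I^-$ likewise with $A^{-1},B^{-1},\alpha^-,\beta^-$. The pair is coherently oriented if both exist, and well oriented if $A,B$ is coherently oriented but $A,B^{-1}$ is not. *)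

theory Defs
  imports "HOL-Analysis.Analysis"
begin

definition sl2z :: "real^2^2 \<Rightarrow> bool" where
  "sl2z M \<longleftrightarrow> det M = 1 \<and> (\<forall>i j. M $ i $ j \<in> \<int>)"

datatype letter = La | Lb

definition phi :: "real^2^2 \<Rightarrow> real^2^2 \<Rightarrow> letter list \<Rightarrow> real^2^2" where
  "phi A B w = foldr (\<lambda>l M. (case l of La \<Rightarrow> A | Lb \<Rightarrow> B) ** M) w (mat 1)"

definition wtr :: "real^2^2 \<Rightarrow> real^2^2 \<Rightarrow> letter list \<Rightarrow> real" where
  "wtr A B w = trace (phi A B w)"

text \<open>The projective line: Some x is the real number x, None is infinity.\<close>
type_synonym p1 = "real option"

definition mob :: "real^2^2 \<Rightarrow> p1 \<Rightarrow> p1" where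
  "mob M p = (case p of
      Some x \<Rightarrow> (if M$2$1 * x + M$2$2 = 0 then None
                  else Some ((M$1$1 * x + M$1$2) / (M$2$1 * x + M$2$2)))
    | None \<Rightarrow> (if M$2$1 = 0 then None else Some (M$1$1 / M$2$1)))"

text \<open>Eigenvalue of M on the line representing a fixed point p
  (eigenvector (x,1) for Some x, (1,0) for None).\<close>
definition multiplier :: "real^2^2 \<Rightarrow> p1 \<Rightarrow> real" where
  "multiplier M p = (case p of Some x \<Rightarrow> M$2$1 * x + M$2$2 | None \<Rightarrow> M$1$1)"

definition attracting_fp :: "real^2^2 \<Rightarrow> p1 \<Rightarrow> bool" where
  "attracting_fp M p \<longleftrightarrow> mob M p = p \<and>
     (\<forall>q. mob M q = q \<longrightarrow> \<bar>multiplier M q\<bar> \<le> \<bar>multiplier M p\<bar>)"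

definition repelling_fp :: "real^2^2 \<Rightarrow> p1 \<Rightarrow> bool" where
  "repelling_fp M p \<longleftrightarrow> mob M p = p \<and>
     (\<forall>q. mob M q = q \<longrightarrow> \<bar>multiplier M p\<bar> \<le> \<bar>multiplier M q\<bar>)"

text \<open>Closed counterclockwise interval from alpha to beta (counterclockwise = increasing
  direction on the real line, then through infinity).\<close>
definition ccw_int :: "p1 \<Rightarrow> p1 \<Rightarrow> p1 set" where
  "ccw_int \<alpha> \<beta> = (case (\<alpha>, \<beta>) of
      (Some x, Some y) \<Rightarrow> (if x \<le> y then Some ` {x..y}
                           else insert None (Some ` ({x..} \<union> {..y})))
    | (Some x, None) \<Rightarrow> insert None (Some ` {x..})
    | (None, Some y) \<Rightarrow> insert None (Some ` {..y})
    | (None, None) \<Rightarrow> {None})"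

definition invariant_int :: "real^2^2 \<Rightarrow> p1 set \<Rightarrow> bool" where
  "invariant_int M S \<longleftrightarrow> mob M ` S \<subseteq> S"

definition Iplus_exists :: "real^2^2 \<Rightarrow> real^2^2 \<Rightarrow> bool" where
  "Iplus_exists A B \<longleftrightarrow> (\<exists>\<alpha> \<beta>. attracting_fp A \<alpha> \<and> attracting_fp B \<beta> \<and>
     (\<alpha> = \<beta> \<or>
      (invariant_int A (ccw_int \<alpha> \<beta>) \<and> invariant_int B (ccw_int \<alpha> \<beta>)) \<or>
      (invariant_int A (ccw_int \<beta> \<alpha>) \<and> invariant_int B (ccw_int \<beta> \<alpha>))))"

definition Iminus_exists :: "real^2^2 \<Rightarrow> real^2^2 \<Rightarrow> bool" where
  "Iminus_exists A B \<longleftrightarrow> (\<exists>\<alpha> \<beta>. repelling_fp A \<alpha> \<and> repelling_fp B \<beta> \<and>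
     (\<alpha> = \<beta> \<or>
      (invariant_int (matrix_inv A) (ccw_int \<alpha> \<beta>) \<and> invariant_int (matrix_inv B) (ccw_int \<alpha> \<beta>)) \<or>
      (invariant_int (matrix_inv A) (ccw_int \<beta> \<alpha>) \<and> invariant_int (matrix_inv B) (ccw_int \<beta> \<alpha>))))"

definition coherently_oriented :: "real^2^2 \<Rightarrow> real^2^2 \<Rightarrow> bool" where
  "coherently_oriented A B \<longleftrightarrow> Iplus_exists A B \<and> Iminus_exists A B"

definition well_oriented :: "real^2^2 \<Rightarrow> real^2^2 \<Rightarrow> bool" where
  "well_oriented A B \<longleftrightarrow> coherently_oriented A B \<and> \<not> coherently_oriented A (matrix_inv B)"

end

theory Submission
  imports Defs
begin

(* Let 1 <= mu < nu be the multipliers of A and B at their attracting fixed points, so that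
   tr A = mu + 1/mu and tr B = nu + 1/nu.  If the attracting fixed points coincide, A and B are
   simultaneously upper triangular and a word with i letters a and j letters b has trace x + 1/x
   with 1 <= x = mu^i nu^j < nu^(i+j).  Otherwise, in a basis (b, t a) of attracting eigenvectors
   A is lower and B upper triangular with off-diagonal entries e/t and t f.  Coherent orientation
   of I^+ forces e f >= 0, and integrality turns [ab] < [b^2] into [ab] + 1 <= [b^2], which gives
   e f < (nu - 1/mu) (nu - 1/nu).  Hence t can be chosen so that both matrices are nonnegative with
   column sums at most nu, strictly for A.  Column sums are submultiplicative, and a nonnegative
   matrix of determinant 1 whose column sums are < c has trace < c + 1/c; rotating the word so
   that it ends in a gives [w] < nu^n + nu^-n = [b^n]. *)

definition mat2 :: "real \<Rightarrow> real \<Rightarrow> real \<Rightarrow> real \<Rightarrow> real^2^2" where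
  "mat2 a b c d = vector [vector [a, b], vector [c, d]]"

lemma mat2_nth [simp]:
  "mat2 a b c d $ 1 $ 1 = a" "mat2 a b c d $ 1 $ 2 = b"
  "mat2 a b c d $ 2 $ 1 = c" "mat2 a b c d $ 2 $ 2 = d"
  by (simp_all add: mat2_def)

lemma mat_1_2 [simp]:
  "(mat 1 :: real^2^2) $ 1 $ 1 = 1" "(mat 1 :: real^2^2) $ 1 $ 2 = 0"
  "(mat 1 :: real^2^2) $ 2 $ 1 = 0" "(mat 1 :: real^2^2) $ 2 $ 2 = 1"
  by (simp_all add: mat_def)

lemma matrix2_eq_iff:
  "(X :: real^2^2) = Y \<longleftrightarrow> X$1$1 = Y$1$1 \<and> X$1$2 = Y$1$2 \<and> X$2$1 = Y$2$1 \<and> X$2$2 = Y$2$2"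
  by (auto simp: vec_eq_iff forall_2)

lemma vector2_eq_iff: "(u :: real^2) = v \<longleftrightarrow> u$1 = v$1 \<and> u$2 = v$2"
  by (auto simp: vec_eq_iff forall_2)

lemma matrix_matrix_mult_2: "((X :: real^2^2) ** Y) $ i $ j = X$i$1 * Y$1$j + X$i$2 * Y$2$j"
  by (simp add: matrix_matrix_mult_def sum_2)

lemma matrix_vector_mult_2: "((X :: real^2^2) *v v) $ i = X$i$1 * v$1 + X$i$2 * v$2"
  by (simp add: matrix_vector_mult_def sum_2)

lemma trace_2: "trace (X :: real^2^2) = X$1$1 + X$2$2"
  by (simp add: trace_def sum_2)

lemma det_minus_mat_2: "det ((X :: real^2^2) - mat \<rho>) = \<rho>\<^sup>2 - trace X * \<rho> + det X"
  by (simp add: det_2 trace_2 mat_def power2_eq_square algebra_simps)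

lemma det_eq_0_iff_kernel: "det (X :: real^'n^'n) = 0 \<longleftrightarrow> (\<exists>v. v \<noteq> 0 \<and> X *v v = 0)"
  by (metis det_eq_0_rank matrix_nonfull_linear_equations_eq less_le rank_bound min.bounded_iff)

lemma plus_inverse_less_iff:
  fixes x y :: real
  assumes "1 \<le> x" "1 \<le> y"
  shows "x + 1/x < y + 1/y \<longleftrightarrow> x < y"
proof -
  have xy: "1 \<le> x * y"
    using assms mult_mono[of 1 x 1 y] by simp
  have diff: "y + 1/y - (x + 1/x) = (y - x) * (x * y - 1) / (x * y)"
    using assms by (simp add: field_simps)
  show ?thesis
  proof
    assume "x < y"
    then have "1 < x * y"
      using assms mult_right_mono[of 1 x y] by linarith
    then have "0 < (y - x) * (x * y - 1) / (x * y)"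
      using \<open>x < y\<close> by simp
    then show "x + 1/x < y + 1/y"
      using diff by linarith
  next
    assume less: "x + 1/x < y + 1/y"
    show "x < y"
    proof (rule ccontr)
      assume "\<not> x < y"
      then have "(y - x) * (x * y - 1) / (x * y) \<le> 0"
        using xy by (simp add: mult_nonpos_nonneg divide_nonpos_pos)
      then show False
        using diff less by linarith
    qed
  qed
qed

section \<open>Traces of words\<close>

lemma phi_Nil [simp]: "phi A B [] = mat 1"
  by (simp add: phi_def)

lemma phi_Cons [simp]: "phi A B (l # w) = (case l of La \<Rightarrow> A | Lb \<Rightarrow> B) ** phi A B w"
  by (simp add: phi_def)

lemma phi_append: "phi A B (u @ v) = phi A B u ** phi A B v"
  by (induction u) (auto simp: matrix_mul_assoc)

lemma det_phi: "det A = 1 \<Longrightarrow> det B = 1 \<Longrightarrow> det (phi A B w) = 1"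
  by (induction w) (auto simp: det_mul split: letter.split)

lemma wtr_rotate: "wtr A B (u @ v) = wtr A B (v @ u)"
  unfolding wtr_def phi_append by (rule trace_mul_sym)

lemma phi_similar:
  assumes "A ** P = P ** A'" "B ** P = P ** B'"
  shows "phi A B w ** P = P ** phi A' B' w"
proof (induction w)
  case (Cons l w)
  have "phi A B (l # w) ** P = (case l of La \<Rightarrow> A | Lb \<Rightarrow> B) ** P ** phi A' B' w"
    by (simp add: Cons flip: matrix_mul_assoc)
  then show ?case
    using assms by (cases l) (simp_all add: matrix_mul_assoc)
qed simp

lemma wtr_similar:
  assumes "invertible P" "A ** P = P ** A'" "B ** P = P ** B'"
  shows "wtr A B w = wtr A' B' w"
proof -
  obtain Q where PQ: "P ** Q = mat 1" and QP: "Q ** P = mat 1"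
    using assms(1) by (auto simp: invertible_def)
  have "trace (phi A' B' w) = trace (Q ** (phi A B w ** P))"
    by (simp add: phi_similar[OF assms(2,3)] matrix_mul_assoc QP)
  also have "\<dots> = trace (phi A B w)"
    by (simp add: trace_mul_sym[of Q] PQ flip: matrix_mul_assoc)
  finally show ?thesis
    by (simp add: wtr_def)
qed

lemma phi_sl2z_Ints:
  assumes "sl2z A" "sl2z B"
  shows "phi A B w $ i $ j \<in> \<int>"
  using assms
  by (induction w arbitrary: i j)
    (auto simp: sl2z_def mat_def matrix_matrix_mult_2 split: letter.split intro!: Ints_add Ints_mult)

lemma wtr_sl2z_Ints: "sl2z A \<Longrightarrow> sl2z B \<Longrightarrow> wtr A B w \<in> \<int>"
  by (simp add: wtr_def trace_2 phi_sl2z_Ints Ints_add)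

lemma count_list_La_Lb: "count_list w La + count_list w Lb = length w"
proof (induction w)
  case (Cons l w)
  then show ?case
    by (cases l) auto
qed simp

lemma phi_upper_triangular:
  assumes "A$2$1 = 0" "B$2$1 = 0"
  shows "phi A B w $ 2 $ 1 = 0 \<and>
    phi A B w $ 1 $ 1 = A$1$1 ^ count_list w La * B$1$1 ^ count_list w Lb \<and>
    phi A B w $ 2 $ 2 = A$2$2 ^ count_list w La * B$2$2 ^ count_list w Lb"
  by (induction w) (auto simp: matrix_matrix_mult_2 assms split: letter.split)

lemma wtr_replicate_Lb_upper_triangular:
  "wtr A (mat2 \<nu> q 0 (1/\<nu>)) (replicate n Lb) = \<nu>^n + 1/\<nu>^n"
proof -
  have "phi A (mat2 \<nu> q 0 (1/\<nu>)) (replicate n Lb) = phi (mat 1) (mat2 \<nu> q 0 (1/\<nu>)) (replicate n Lb)"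
    by (induction n) simp_all
  then show ?thesis
    using phi_upper_triangular[of "mat 1" "mat2 \<nu> q 0 (1/\<nu>)" "replicate n Lb"]
      count_list_La_Lb[of "replicate n Lb"]
    by (simp add: wtr_def trace_2 power_one_over)
qed

lemma wtr_upper_triangular_less:
  assumes "1 \<le> \<mu>" "\<mu> < \<nu>" "La \<in> set w"
  shows "wtr (mat2 \<mu> p 0 (1/\<mu>)) (mat2 \<nu> q 0 (1/\<nu>)) w < \<nu>^length w + 1/\<nu>^length w"
proof -
  define i where "i = count_list w La"
  define x where "x = \<mu>^i * \<nu>^count_list w Lb"
  have wtr_eq: "wtr (mat2 \<mu> p 0 (1/\<mu>)) (mat2 \<nu> q 0 (1/\<nu>)) w = x + 1/x"
    using phi_upper_triangular[of "mat2 \<mu> p 0 (1/\<mu>)" "mat2 \<nu> q 0 (1/\<nu>)" w]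
    by (simp add: wtr_def trace_2 x_def i_def power_one_over)
  have x_ge: "1 \<le> x"
    using assms mult_mono[of 1 "\<mu>^i" 1 "\<nu>^count_list w Lb"] by (simp add: x_def)
  have "0 < i"
    using assms(3) count_list_0_iff[of w La] by (simp add: i_def)
  then have "\<mu>^i < \<nu>^i"
    using assms by (simp add: power_strict_mono)
  then have "x < \<nu>^i * \<nu>^count_list w Lb"
    using assms by (simp add: x_def)
  then have x_less: "x < \<nu>^length w"
    by (simp add: i_def count_list_La_Lb flip: power_add)
  have "1 \<le> \<nu>^length w"
    using assms by simp
  then show ?thesis
    using plus_inverse_less_iff[OF x_ge] x_less wtr_eq by simp
qed

section \<open>Nonnegative matrices and column sums\<close>

definition nonneg_mat :: "real^'n^'m \<Rightarrow> bool" where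
  "nonneg_mat X \<longleftrightarrow> (\<forall>i j. 0 \<le> X$i$j)"

definition col_sum :: "real^'n^'m \<Rightarrow> 'n \<Rightarrow> real" where
  "col_sum X j = (\<Sum>i\<in>UNIV. X$i$j)"

lemma nonneg_mat_mult: "nonneg_mat X \<Longrightarrow> nonneg_mat Y \<Longrightarrow> nonneg_mat (X ** Y)"
  by (simp add: nonneg_mat_def matrix_matrix_mult_def sum_nonneg)

lemma col_sum_nonneg: "nonneg_mat X \<Longrightarrow> 0 \<le> col_sum X j"
  by (simp add: nonneg_mat_def col_sum_def sum_nonneg)

lemma col_sum_mult: "col_sum (X ** Y) j = (\<Sum>k\<in>UNIV. col_sum X k * Y$k$j)"
proof -
  have "col_sum (X ** Y) j = (\<Sum>i\<in>UNIV. \<Sum>k\<in>UNIV. X$i$k * Y$k$j)"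
    by (simp add: col_sum_def matrix_matrix_mult_def)
  also have "\<dots> = (\<Sum>k\<in>UNIV. \<Sum>i\<in>UNIV. X$i$k * Y$k$j)"
    by (rule sum.swap)
  finally show ?thesis
    by (simp add: col_sum_def sum_distrib_right)
qed

lemma col_sum_mult_le:
  assumes "nonneg_mat Y" "\<And>k. col_sum X k \<le> c"
  shows "col_sum (X ** Y) j \<le> c * col_sum Y j"
proof -
  have "col_sum (X ** Y) j \<le> (\<Sum>k\<in>UNIV. c * Y$k$j)"
    unfolding col_sum_mult
    using assms by (intro sum_mono mult_right_mono) (auto simp: nonneg_mat_def)
  then show ?thesis
    by (simp add: col_sum_def sum_distrib_left)
qed

lemma col_sum_phi_le:
  assumes "nonneg_mat A" "nonneg_mat B" "\<And>j. col_sum A j \<le> c" "\<And>j. col_sum B j \<le> c"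
  shows "nonneg_mat (phi A B w) \<and> (\<forall>j. col_sum (phi A B w) j \<le> c ^ length w)"
proof (induction w)
  case Nil
  show ?case
    by (simp add: nonneg_mat_def col_sum_def sum_2 forall_2)
next
  case (Cons l w)
  have "0 \<le> c"
    using col_sum_nonneg[OF assms(1)] assms(3) order_trans by blast
  have "col_sum (phi A B (l # w)) j \<le> c * c ^ length w" for j
  proof -
    have "col_sum (phi A B (l # w)) j \<le> c * col_sum (phi A B w) j"
      using Cons assms by (cases l) (auto intro: col_sum_mult_le)
    also have "\<dots> \<le> c * c ^ length w"
      using Cons \<open>0 \<le> c\<close> by (simp add: mult_left_mono)
    finally show ?thesis .
  qed
  moreover have "nonneg_mat (phi A B (l # w))"
    using Cons assms by (cases l) (auto intro: nonneg_mat_mult)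
  ultimately show ?case
    by simp
qed

lemma trace_less_of_col_sum_less:
  fixes X :: "real^2^2"
  assumes "nonneg_mat X" "det X = 1" "\<And>j. col_sum X j < c"
  shows "trace X < c + 1/c"
proof -
  have nonneg: "0 \<le> X$1$2" "0 \<le> X$2$1"
    using assms(1) by (auto simp: nonneg_mat_def)
  have col1: "X$2$1 < c - X$1$1" and col2: "X$1$2 < c - X$2$2"
    using assms(3)[of 1] assms(3)[of 2] by (auto simp: col_sum_def sum_2)
  have "X$1$2 * X$2$1 \<le> X$1$2 * (c - X$1$1)"
    using nonneg col1 by (intro mult_left_mono) auto
  also have "\<dots> < (c - X$2$2) * (c - X$1$1)"
    using nonneg col1 col2 by (intro mult_strict_right_mono) auto
  finally have "X$1$2 * X$2$1 < (c - X$2$2) * (c - X$1$1)" .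
  moreover have "X$1$1 * X$2$2 - X$1$2 * X$2$1 = 1"
    using assms(2) by (simp add: det_2)
  ultimately have "c * trace X < c * c + 1"
    by (simp add: trace_2 algebra_simps)
  moreover have "0 < c"
    using col_sum_nonneg[OF assms(1)] assms(3) order_le_less_trans by blast
  ultimately show ?thesis
    by (simp add: field_simps)
qed

lemma wtr_less_of_col_sum_less:
  assumes "nonneg_mat A" "nonneg_mat B" "det A = 1" "det B = 1"
    and "\<And>j. col_sum A j < c" "\<And>j. col_sum B j \<le> c" "La \<in> set w"
  shows "wtr A B w < c ^ length w + 1 / c ^ length w"
proof -
  obtain u v where w: "w = u @ La # v"
    using split_list[OF assms(7)] by blast
  define X where "X = phi A B (v @ u)"
  have "0 < c"
    using col_sum_nonneg[OF assms(1)] assms(5) order_le_less_trans by blast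
  have X: "nonneg_mat X" "\<And>j. col_sum X j \<le> c ^ length (v @ u)"
    using col_sum_phi_le[OF assms(1,2) less_imp_le[OF assms(5)] assms(6), of "v @ u"]
    unfolding X_def by blast+
  have "wtr A B w = trace (X ** A)"
    using wtr_rotate[of A B "u @ [La]" v] by (simp add: w wtr_def X_def phi_append matrix_mul_assoc)
  also have "\<dots> < c ^ length w + 1 / c ^ length w"
  proof (rule trace_less_of_col_sum_less)
    show "nonneg_mat (X ** A)"
      by (rule nonneg_mat_mult[OF X(1) assms(1)])
    show "det (X ** A) = 1"
      by (simp add: X_def det_mul det_phi assms(3,4))
    show "col_sum (X ** A) j < c ^ length w" for j
    proof -
      have "col_sum (X ** A) j \<le> c ^ length (v @ u) * col_sum A j"
        by (rule col_sum_mult_le[OF assms(1) X(2)])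
      also have "\<dots> < c ^ length (v @ u) * c"
        using assms(5) \<open>0 < c\<close> by simp
      finally show ?thesis
        by (simp add: w mult.commute add.commute)
    qed
  qed
  finally show ?thesis .
qed

lemma nonneg_mat_mat2: "nonneg_mat (mat2 a b c d) \<longleftrightarrow> 0 \<le> a \<and> 0 \<le> b \<and> 0 \<le> c \<and> 0 \<le> d"
  by (auto simp: nonneg_mat_def forall_2)

lemma col_sum_mat2: "col_sum (mat2 a b c d) j = (if j = 1 then a + c else b + d)"
  using exhaust_2[of j] by (auto simp: col_sum_def sum_2)

section \<open>Fixed points and multipliers\<close>

definition hvec :: "p1 \<Rightarrow> real^2" where
  "hvec p = (case p of Some x \<Rightarrow> vector [x, 1] | None \<Rightarrow> vector [1, 0])"

lemma hvec_simps [simp]: "hvec (Some x) = vector [x, 1]" "hvec None = vector [1, 0]"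
  by (simp_all add: hvec_def)

lemma hvec_nonzero: "hvec p \<noteq> 0"
  by (cases p) (auto simp: vector2_eq_iff)

lemma mob_hvec: "\<exists>c. M *v hvec q = c *\<^sub>R hvec (mob M q)"
proof (cases q)
  case None
  then show ?thesis
    by (cases "M$2$1 = 0")
      (auto simp: mob_def vector2_eq_iff matrix_vector_mult_2 intro: exI[of _ "M$2$1"] exI[of _ "M$1$1"])
next
  case (Some x)
  then show ?thesis
    by (cases "M$2$1 * x + M$2$2 = 0")
      (auto simp: mob_def vector2_eq_iff matrix_vector_mult_2
        intro: exI[of _ "M$2$1 * x + M$2$2"] exI[of _ "M$1$1 * x + M$1$2"])
qed

lemma multiplier_eqI: "M *v hvec q = \<rho> *\<^sub>R hvec q \<Longrightarrow> multiplier M q = \<rho>"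
  by (cases q) (auto simp: multiplier_def vector2_eq_iff matrix_vector_mult_2)

lemma hvec_multiplier: "mob M q = q \<Longrightarrow> M *v hvec q = multiplier M q *\<^sub>R hvec q"
  using mob_hvec[of M q] multiplier_eqI by force

lemma mob_fixedI: "M *v hvec q = \<rho> *\<^sub>R hvec q \<Longrightarrow> \<rho> \<noteq> 0 \<Longrightarrow> mob M q = q"
  by (cases q) (auto simp: mob_def vector2_eq_iff matrix_vector_mult_2)

lemma nonzero_eq_scaled_hvec: "(v :: real^2) \<noteq> 0 \<Longrightarrow> \<exists>c q. c \<noteq> 0 \<and> v = c *\<^sub>R hvec q"
proof (cases "v$2 = 0")
  case True
  assume "v \<noteq> 0"
  with True show ?thesis
    by (intro exI[of _ "v$1"] exI[of _ None]) (auto simp: vector2_eq_iff)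
next
  case False
  then show ?thesis
    by (intro exI[of _ "v$2"] exI[of _ "Some (v$1 / v$2)"]) (auto simp: vector2_eq_iff)
qed

lemma fixed_point_of_char_root:
  assumes "det (M - mat \<rho>) = 0" "\<rho> \<noteq> 0"
  shows "\<exists>q. mob M q = q \<and> multiplier M q = \<rho>"
proof -
  obtain v where "v \<noteq> 0" and ker: "(M - mat \<rho>) *v v = 0"
    using assms(1) det_eq_0_iff_kernel by blast
  have eigen: "M *v v = \<rho> *\<^sub>R v"
    using ker by (simp add: vector2_eq_iff matrix_vector_mult_2 mat_def algebra_simps)
  obtain c q where "c \<noteq> 0" "v = c *\<^sub>R hvec q"
    using nonzero_eq_scaled_hvec[OF \<open>v \<noteq> 0\<close>] by blast
  then have "c *\<^sub>R (M *v hvec q) = c *\<^sub>R (\<rho> *\<^sub>R hvec q)"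
    using eigen by (simp add: matrix_vector_mult_scaleR)
  then have "M *v hvec q = \<rho> *\<^sub>R hvec q"
    using \<open>c \<noteq> 0\<close> scaleR_cancel_left by blast
  then show ?thesis
    using mob_fixedI multiplier_eqI assms(2) by blast
qed

lemma multiplier_char_root:
  assumes "mob M q = q"
  shows "(multiplier M q)\<^sup>2 - trace M * multiplier M q + det M = 0"
proof -
  have "(M - mat (multiplier M q)) *v hvec q = 0"
    using hvec_multiplier[OF assms] by (simp add: vector2_eq_iff matrix_vector_mult_2 mat_def algebra_simps)
  then have "det (M - mat (multiplier M q)) = 0"
    using det_eq_0_iff_kernel hvec_nonzero by blast
  then show ?thesis
    by (simp add: det_minus_mat_2)
qed

lemma attracting_multiplier:
  assumes "det A = 1" "2 \<le> trace A" "attracting_fp A \<alpha>"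
  shows "1 \<le> multiplier A \<alpha> \<and> trace A = multiplier A \<alpha> + 1 / multiplier A \<alpha>"
proof -
  define m where "m = multiplier A \<alpha>"
  have root: "m\<^sup>2 - trace A * m + 1 = 0"
    using multiplier_char_root[of A \<alpha>] assms(1,3) by (simp add: attracting_fp_def m_def)
  have "0 < m"
    using root assms(2) by (smt (verit) mult_nonneg_nonpos zero_le_power2)
  then have tr: "trace A = m + 1/m"
    using root by (simp add: field_simps power2_eq_square)
  have "det (A - mat (1/m)) = 0"
    using \<open>0 < m\<close> by (simp add: det_minus_mat_2 tr assms(1) field_simps power2_eq_square)
  then obtain q where "mob A q = q" "multiplier A q = 1/m"
    using fixed_point_of_char_root \<open>0 < m\<close> by fastforce
  then have "1/m \<le> m"
    using assms(3) \<open>0 < m\<close> by (force simp: attracting_fp_def m_def)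
  then have "1 \<le> m"
    using \<open>0 < m\<close> by (smt (verit) divide_le_eq mult_le_cancel_left1 power2_eq_square)
  then show ?thesis
    using tr by (simp add: m_def)
qed

definition cross2 :: "real^2 \<Rightarrow> real^2 \<Rightarrow> real" where
  "cross2 u v = u$1 * v$2 - u$2 * v$1"

lemma cross2_antisym: "cross2 v u = - cross2 u v"
  by (simp add: cross2_def)

lemma cross2_matrix_vector_mult: "cross2 (M *v u) (M *v v) = det M * cross2 u v"
  by (simp add: cross2_def matrix_vector_mult_2 det_2 algebra_simps)

lemma cross2_hvec_neq: "\<alpha> \<noteq> \<beta> \<Longrightarrow> cross2 (hvec \<alpha>) (hvec \<beta>) \<noteq> 0"
  by (cases \<alpha>; cases \<beta>) (auto simp: cross2_def)

lemma cramer_2: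
  assumes "cross2 u v \<noteq> 0"
  shows "x = (cross2 x v / cross2 u v) *\<^sub>R u + (cross2 u x / cross2 u v) *\<^sub>R v"
proof -
  have "cross2 x v *\<^sub>R u + cross2 u x *\<^sub>R v = cross2 u v *\<^sub>R x"
    by (simp add: vector2_eq_iff cross2_def algebra_simps)
  then have "(1 / cross2 u v) *\<^sub>R (cross2 x v *\<^sub>R u + cross2 u x *\<^sub>R v) = x"
    using assms by simp
  then show ?thesis
    by (simp add: scaleR_add_right)
qed

lemma det_one_eigen_complement:
  assumes "det M = 1" "M *v a = m *\<^sub>R a" "cross2 a c \<noteq> 0"
  shows "\<exists>p. M *v c = p *\<^sub>R a + (1/m) *\<^sub>R c"
proof -
  have "m * cross2 a (M *v c) = cross2 (M *v a) (M *v c)"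
    by (simp add: assms(2) cross2_def algebra_simps)
  also have "\<dots> = cross2 a c"
    by (simp add: cross2_matrix_vector_mult assms(1))
  finally have "cross2 a (M *v c) / cross2 a c = 1/m"
    using assms(3) by (cases "m = 0") (auto simp: field_simps)
  then show ?thesis
    using cramer_2[OF assms(3), of "M *v c"] by metis
qed

definition cols2 :: "real^2 \<Rightarrow> real^2 \<Rightarrow> real^2^2" where
  "cols2 u v = mat2 (u$1) (v$1) (u$2) (v$2)"

lemma invertible_cols2: "invertible (cols2 u v) \<longleftrightarrow> cross2 u v \<noteq> 0"
  by (simp add: invertible_det_nz det_2 cols2_def cross2_def mult.commute)

lemma matrix_mult_cols2:
  assumes "M *v u = x11 *\<^sub>R u + x21 *\<^sub>R v" "M *v v = x12 *\<^sub>R u + x22 *\<^sub>R v"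
  shows "M ** cols2 u v = cols2 u v ** mat2 x11 x12 x21 x22"
  using assms by (simp add: matrix2_eq_iff vector2_eq_iff matrix_matrix_mult_2 matrix_vector_mult_2
      cols2_def algebra_simps)

lemma ccw_int_endpoints: "\<alpha> \<in> ccw_int \<alpha> \<beta>" "\<beta> \<in> ccw_int \<alpha> \<beta>"
  by (cases \<alpha>; cases \<beta>; auto simp: ccw_int_def)+

lemma ccw_int_cross2_sign:
  assumes "\<alpha> \<noteq> \<beta>" "p \<in> ccw_int \<alpha> \<beta>"
  shows "cross2 (hvec p) (hvec \<beta>) * cross2 (hvec \<alpha>) (hvec p) * cross2 (hvec \<alpha>) (hvec \<beta>) \<le> 0"
proof (cases \<alpha>; cases \<beta>)
  fix x y
  assume \<alpha>: "\<alpha> = Some x" and \<beta>: "\<beta> = Some y"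
  show ?thesis
  proof (cases "x \<le> y")
    case True
    then obtain z where "p = Some z" "x \<le> z" "z \<le> y"
      using assms \<alpha> \<beta> by (auto simp: ccw_int_def)
    then show ?thesis
      using \<alpha> \<beta> by (simp add: cross2_def mult_nonneg_nonpos2 mult_nonpos_nonpos mult_le_0_iff)
  next
    case False
    then consider "p = None" | z where "p = Some z" "x \<le> z \<or> z \<le> y"
      using assms \<alpha> \<beta> by (auto simp: ccw_int_def)
    then show ?thesis
      using \<alpha> \<beta> False by cases (auto simp: cross2_def mult_le_0_iff)
  qed
qed (use assms in \<open>auto simp: ccw_int_def cross2_def\<close>)

lemma ccw_int_coeff_sign:
  assumes "\<alpha> \<noteq> \<beta>" "p \<in> ccw_int \<alpha> \<beta>" "c *\<^sub>R hvec p = s *\<^sub>R hvec \<alpha> + r *\<^sub>R hvec \<beta>"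
  shows "s * r * cross2 (hvec \<alpha>) (hvec \<beta>) \<le> 0"
proof -
  define E where "E = cross2 (hvec \<alpha>) (hvec \<beta>)"
  have "c * cross2 (hvec p) (hvec \<beta>) = s * E" "c * cross2 (hvec \<alpha>) (hvec p) = r * E"
    using arg_cong[OF assms(3), of "\<lambda>v. cross2 v (hvec \<beta>)"] arg_cong[OF assms(3), of "cross2 (hvec \<alpha>)"]
    by (simp_all add: E_def cross2_def algebra_simps)
  then have "s * r * E * E\<^sup>2 = c\<^sup>2 * (cross2 (hvec p) (hvec \<beta>) * cross2 (hvec \<alpha>) (hvec p) * E)"
    by (simp add: power2_eq_square) (metis mult.commute mult.left_commute)
  also have "\<dots> \<le> 0"
    using ccw_int_cross2_sign[OF assms(1,2)] by (simp add: E_def mult_nonneg_nonpos)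
  finally show ?thesis
    using cross2_hvec_neq[OF assms(1)] by (simp add: E_def mult_le_0_iff)
qed

lemma invariant_ccw_int_coeff_sign:
  assumes "x \<noteq> y" "invariant_int M (ccw_int x y)" "z \<in> {x, y}"
    and "M *v hvec z = s *\<^sub>R hvec x + r *\<^sub>R hvec y"
  shows "s * r * cross2 (hvec x) (hvec y) \<le> 0"
proof -
  obtain c where "M *v hvec z = c *\<^sub>R hvec (mob M z)"
    using mob_hvec by blast
  moreover have "mob M z \<in> ccw_int x y"
    using assms(2,3) ccw_int_endpoints by (auto simp: invariant_int_def)
  ultimately show ?thesis
    using ccw_int_coeff_sign[OF assms(1)] assms(4) by metis
qed

lemma coherent_coeff_product_nonneg:
  assumes "\<alpha> \<noteq> \<beta>" "0 < \<mu>" "0 < \<nu>"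
    and A: "A *v hvec \<beta> = e *\<^sub>R hvec \<alpha> + (1/\<mu>) *\<^sub>R hvec \<beta>"
    and B: "B *v hvec \<alpha> = f *\<^sub>R hvec \<beta> + (1/\<nu>) *\<^sub>R hvec \<alpha>"
    and "(invariant_int A (ccw_int \<alpha> \<beta>) \<and> invariant_int B (ccw_int \<alpha> \<beta>)) \<or>
         (invariant_int A (ccw_int \<beta> \<alpha>) \<and> invariant_int B (ccw_int \<beta> \<alpha>))"
  shows "0 \<le> e * f"
proof -
  \<comment> \<open>Each generator maps the other's attracting fixed point into the common invariant interval.\<close>
  define E where "E = cross2 (hvec \<alpha>) (hvec \<beta>)"
  have A': "A *v hvec \<beta> = (1/\<mu>) *\<^sub>R hvec \<beta> + e *\<^sub>R hvec \<alpha>"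
    and B': "B *v hvec \<alpha> = (1/\<nu>) *\<^sub>R hvec \<alpha> + f *\<^sub>R hvec \<beta>"
    using A B by (simp_all add: add.commute)
  from assms(6) have "(e * E \<le> 0 \<and> f * E \<le> 0) \<or> (0 \<le> e * E \<and> 0 \<le> f * E)"
  proof (elim disjE conjE)
    assume "invariant_int A (ccw_int \<alpha> \<beta>)" "invariant_int B (ccw_int \<alpha> \<beta>)"
    then have "e * (1/\<mu>) * E \<le> 0" "(1/\<nu>) * f * E \<le> 0"
      using invariant_ccw_int_coeff_sign[OF assms(1) _ _ A] invariant_ccw_int_coeff_sign[OF assms(1) _ _ B']
      by (auto simp: E_def)
    then show ?thesis
      using assms(2,3) by (simp add: divide_le_0_iff)
  next
    assume "invariant_int A (ccw_int \<beta> \<alpha>)" "invariant_int B (ccw_int \<beta> \<alpha>)"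
    then have "(1/\<mu>) * e * - E \<le> 0" "f * (1/\<nu>) * - E \<le> 0"
      using invariant_ccw_int_coeff_sign[OF assms(1)[symmetric] _ _ A']
        invariant_ccw_int_coeff_sign[OF assms(1)[symmetric] _ _ B]
      by (auto simp: E_def cross2_antisym[of "hvec \<beta>"])
    then show ?thesis
      using assms(2,3) by (simp add: zero_le_divide_iff)
  qed
  then have "0 \<le> (e * E) * (f * E)"
    by (elim disjE conjE) (simp_all add: mult_nonpos_nonpos)
  then have "0 \<le> (e * f) * E\<^sup>2"
    by (simp add: power2_eq_square algebra_simps)
  then show ?thesis
    using cross2_hvec_neq[OF assms(1)] by (simp add: E_def zero_le_mult_iff)
qed

section \<open>The two configurations of attracting fixed points\<close>

lemma exists_rescaling_bounded:
  fixes e f L M :: real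
  assumes "0 \<le> e * f" "e * f < L * M" "0 < L" "0 < M"
  shows "\<exists>t. t \<noteq> 0 \<and> 0 \<le> e / t \<and> e / t < M \<and> 0 \<le> t * f \<and> t * f \<le> L"
proof -
  have pos: "\<exists>t>0. t * f \<le> L \<and> e < t * M" if "0 \<le> e" "0 \<le> f" "e * f < L * M" for e f
  proof (cases "f = 0")
    case True
    then show ?thesis
      using that assms(3,4) by (intro exI[of _ "(e + 1) / M"]) (auto simp: field_simps)
  next
    case False
    then show ?thesis
      using that assms(3,4) by (intro exI[of _ "L / f"]) (auto simp: field_simps)
  qed
  from assms(1) consider "0 \<le> e" "0 \<le> f" | "e \<le> 0" "f \<le> 0"
    by (auto simp: zero_le_mult_iff)
  then show ?thesis
  proof cases
    case 1
    then obtain t where "t > 0" "t * f \<le> L" "e < t * M"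
      using pos assms(2) by blast
    then show ?thesis
      using 1 by (intro exI[of _ t]) (auto simp: field_simps)
  next
    case 2
    then obtain t where "t > 0" "t * - f \<le> L" "- e < t * M"
      using pos[of "- e" "- f"] assms(2) by auto
    then show ?thesis
      using 2 by (intro exI[of _ "- t"]) (auto simp: field_simps intro: mult_nonpos_nonneg)
  qed
qed

lemma wtr_less_replicate_Lb_common_eigenvector:
  assumes "det A = 1" "det B = 1" "A *v a = \<mu> *\<^sub>R a" "B *v a = \<nu> *\<^sub>R a" "a \<noteq> 0"
    and "1 \<le> \<mu>" "\<mu> < \<nu>" "La \<in> set w"
  shows "wtr A B w < wtr A B (replicate (length w) Lb)"
proof -
  obtain c where c: "cross2 a c \<noteq> 0"
  proof (cases "a$1 = 0")
    case True
    then show ?thesis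
      using assms(5) by (intro that[of "vector [1, 0]"]) (auto simp: cross2_def vector2_eq_iff)
  next
    case False
    then show ?thesis
      by (intro that[of "vector [0, 1]"]) (simp add: cross2_def)
  qed
  obtain p where p: "A *v c = p *\<^sub>R a + (1/\<mu>) *\<^sub>R c"
    using det_one_eigen_complement[OF assms(1,3) c] by blast
  obtain q where q: "B *v c = q *\<^sub>R a + (1/\<nu>) *\<^sub>R c"
    using det_one_eigen_complement[OF assms(2,4) c] by blast
  have "wtr A B v = wtr (mat2 \<mu> p 0 (1/\<mu>)) (mat2 \<nu> q 0 (1/\<nu>)) v" for v
    by (intro wtr_similar[of "cols2 a c"] matrix_mult_cols2)
      (simp_all add: invertible_cols2 c assms(3,4) p q)
  then show ?thesis
    using wtr_upper_triangular_less[OF assms(6-8)] wtr_replicate_Lb_upper_triangular by simp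
qed

lemma wtr_less_replicate_Lb_distinct_eigenvectors:
  assumes "A *v a = \<mu> *\<^sub>R a" "B *v b = \<nu> *\<^sub>R b"
    and "A *v b = e *\<^sub>R a + (1/\<mu>) *\<^sub>R b" "B *v a = f *\<^sub>R b + (1/\<nu>) *\<^sub>R a"
    and "cross2 b a \<noteq> 0" "1 \<le> \<mu>" "\<mu> < \<nu>" "0 \<le> e * f"
    and "wtr A B [La, Lb] + 1 \<le> wtr A B [Lb, Lb]" "La \<in> set w"
  shows "wtr A B w < wtr A B (replicate (length w) Lb)"
proof -
  \<comment> \<open>Conjugation by the basis (b, t a); traces do not depend on t, column sums do.\<close>
  have sim: "wtr A B v = wtr (mat2 (1/\<mu>) 0 (e/t) \<mu>) (mat2 \<nu> (t*f) 0 (1/\<nu>)) v" if "t \<noteq> 0" for t v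
    by (intro wtr_similar[of "cols2 b (t *\<^sub>R a)"] matrix_mult_cols2)
      (use that assms(1-5) in \<open>simp_all add: invertible_cols2 cross2_def matrix_vector_mult_scaleR algebra_simps\<close>)
  have "\<nu>/\<mu> + e*f + \<mu>/\<nu> + 1 \<le> \<nu>*\<nu> + 1/\<nu> * (1/\<nu>)"
    using assms(9) unfolding sim[OF one_neq_zero] by (simp add: wtr_def trace_2 matrix_matrix_mult_2)
  moreover have "1/\<nu> * (1/\<nu>) \<le> \<mu>/\<nu>"
    using assms(6,7) mult_mono[of 1 \<mu> 1 \<nu>] by (simp add: field_simps)
  moreover have "(\<nu> - 1/\<mu>) * (\<nu> - 1/\<nu>) = \<nu>*\<nu> - 1 - \<nu>/\<mu> + 1/(\<mu>*\<nu>)"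
    using assms(6,7) by (simp add: field_simps)
  moreover have "0 < 1/(\<mu>*\<nu>)"
    using assms(6,7) by simp
  ultimately have ef: "e*f < (\<nu> - 1/\<nu>) * (\<nu> - 1/\<mu>)"
    unfolding mult.commute[of "\<nu> - 1/\<nu>"] by linarith
  have "1/\<nu> \<le> 1" "1/\<mu> \<le> 1"
    using assms(6,7) by simp_all
  then have "0 < \<nu> - 1/\<nu>" "0 < \<nu> - 1/\<mu>"
    using assms(6,7) by linarith+
  then obtain t where t: "t \<noteq> 0" "0 \<le> e/t" "e/t < \<nu> - 1/\<mu>" "0 \<le> t*f" "t*f \<le> \<nu> - 1/\<nu>"
    using exists_rescaling_bounded[OF assms(8) ef] by blast
  have "wtr (mat2 (1/\<mu>) 0 (e/t) \<mu>) (mat2 \<nu> (t*f) 0 (1/\<nu>)) w < \<nu>^length w + 1/\<nu>^length w"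
    using assms(6,7,10) t
    by (intro wtr_less_of_col_sum_less) (auto simp: nonneg_mat_mat2 col_sum_mat2 det_2)
  then show ?thesis
    using sim[OF t(1)] wtr_replicate_Lb_upper_triangular by simp
qed

lemma wtr_less_replicate_Lb:
  assumes "det A = 1" "det B = 1" "2 \<le> trace A" "trace A < trace B" "Iplus_exists A B"
    and "wtr A B [La, Lb] + 1 \<le> wtr A B [Lb, Lb]" "La \<in> set w"
  shows "wtr A B w < wtr A B (replicate (length w) Lb)"
proof -
  obtain \<alpha> \<beta> where \<alpha>: "attracting_fp A \<alpha>" and \<beta>: "attracting_fp B \<beta>"
    and intervals: "\<alpha> = \<beta> \<or>
      (invariant_int A (ccw_int \<alpha> \<beta>) \<and> invariant_int B (ccw_int \<alpha> \<beta>)) \<or>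
      (invariant_int A (ccw_int \<beta> \<alpha>) \<and> invariant_int B (ccw_int \<beta> \<alpha>))"
    using assms(5) by (auto simp: Iplus_exists_def)
  define \<mu> \<nu> where "\<mu> = multiplier A \<alpha>" and "\<nu> = multiplier B \<beta>"
  have \<mu>: "1 \<le> \<mu>" "trace A = \<mu> + 1/\<mu>" and \<nu>: "1 \<le> \<nu>" "trace B = \<nu> + 1/\<nu>"
    using attracting_multiplier[OF assms(1,3) \<alpha>] attracting_multiplier[OF assms(2) _ \<beta>] assms(3,4)
    by (auto simp: \<mu>_def \<nu>_def)
  have "\<mu> < \<nu>"
    using plus_inverse_less_iff[OF \<mu>(1) \<nu>(1)] \<mu>(2) \<nu>(2) assms(4) by simp
  have eigA: "A *v hvec \<alpha> = \<mu> *\<^sub>R hvec \<alpha>" and eigB: "B *v hvec \<beta> = \<nu> *\<^sub>R hvec \<beta>"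
    using \<alpha> \<beta> hvec_multiplier by (auto simp: attracting_fp_def \<mu>_def \<nu>_def)
  show ?thesis
  proof (cases "\<alpha> = \<beta>")
    case True
    then show ?thesis
      using wtr_less_replicate_Lb_common_eigenvector[OF assms(1,2) eigA _ hvec_nonzero \<mu>(1) \<open>\<mu> < \<nu>\<close> assms(7)]
        eigB by simp
  next
    case False
    obtain e where e: "A *v hvec \<beta> = e *\<^sub>R hvec \<alpha> + (1/\<mu>) *\<^sub>R hvec \<beta>"
      using det_one_eigen_complement[OF assms(1) eigA cross2_hvec_neq[OF False]] by blast
    obtain f where f: "B *v hvec \<alpha> = f *\<^sub>R hvec \<beta> + (1/\<nu>) *\<^sub>R hvec \<alpha>"
      using det_one_eigen_complement[OF assms(2) eigB cross2_hvec_neq] False by metis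
    have "0 \<le> e * f"
      using coherent_coeff_product_nonneg[OF False _ _ e f] intervals False \<mu>(1) \<nu>(1) by simp
    with False show ?thesis
      using wtr_less_replicate_Lb_distinct_eigenvectors[OF eigA eigB e f cross2_hvec_neq \<mu>(1) \<open>\<mu> < \<nu>\<close>]
        assms(6,7) by simp
  qed
qed

theorem lemma5p6:
  fixes A B :: "real^2^2"
  assumes "sl2z A" and "sl2z B"
    and "A ** B \<noteq> B ** A"
    and "well_oriented A B"
    and "2 \<le> trace A" and "trace A < trace B"
    and "wtr A B [La, Lb] < wtr A B [Lb, Lb]"
  shows "\<forall>ks::nat list. ks \<noteq> [] \<and> (\<forall>k\<in>set ks. 1 \<le> k) \<longrightarrow>
           wtr A B (concat (map (\<lambda>k. La # replicate k Lb) ks))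
             < wtr A B (replicate (sum_list ks + length ks) Lb)"
proof (intro allI impI)
  fix ks :: "nat list"
  assume "ks \<noteq> [] \<and> (\<forall>k\<in>set ks. 1 \<le> k)"
  then have "La \<in> set (concat (map (\<lambda>k. La # replicate k Lb) ks))"
    by (cases ks) auto
  moreover have "length (concat (map (\<lambda>k. La # replicate k Lb) ks)) = sum_list ks + length ks"
    by (induction ks) auto
  moreover have "wtr A B [La, Lb] + 1 \<le> wtr A B [Lb, Lb]"
    using assms(7) wtr_sl2z_Ints[OF assms(1,2), of "[La, Lb]"] wtr_sl2z_Ints[OF assms(1,2), of "[Lb, Lb]"]
    by (auto elim!: Ints_cases)
  moreover have "det A = 1" "det B = 1"
    using assms(1,2) by (simp_all add: sl2z_def)
  moreover have "Iplus_exists A B"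
    using assms(4) by (simp add: well_oriented_def coherently_oriented_def)
  ultimately show "wtr A B (concat (map (\<lambda>k. La # replicate k Lb) ks))
             < wtr A B (replicate (sum_list ks + length ks) Lb)"
    using wtr_less_replicate_Lb assms(5,6) by metis
qed

end
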